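(* Let $f,a_1,p,d_2\in\mathbb{C}$ with $\mathrm{Re}(f-2a_1-2d_2-2)>0$, such that the series below is well defined (no lower parameter is a nonpositive integer), $a_1\ne0$, and the quantities below are defined and $k$ is not a nonpositive integer. Put $$h=\frac{p(f-p-1)}{a_1},\qquad k=\frac{h(1+a_1-f/2)(1+d_2+a_1-f)}{d_2f/2-h(1+d_2+a_1-f/2)}.$$ Then $$ {}_{6}F_{5}\left[\begin{matrix} f-1,\ \frac{f+1}{2},\ a_1,\ f-p,\ p+1,\ d_2\\ \frac{f-1}{2},\ f-a_1,\ p,\ f-p-1,\ f-d_2\end{matrix};1\right]=\frac{\Gamma(f/2)\Gamma(f-d_2)\Gamma(f-a_1)\Gamma(f/2-a_1-d_2-1)}{\Gamma(f)\Gamma(f/2-d_2)\Gamma(f/2-a_1-1)\Gamma(f-a_1-d_2-1)}\cdot\frac{\Gamma(k)}{\Gamma(k+1)}.$$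
   Context: $(x)_n$ denotes the Pochhammer symbol: $(x)_0=1$, $(x)_n=x(x+1)\cdots(x+n-1)$ for $n\ge1$. The generalized hypergeometric function is $${}_{r+1}F_{r}\left[\begin{matrix} a_1,\dots,a_{r+1}\\ b_1,\dots,b_r\end{matrix};z\right]=\sum_{n=0}^{\infty}\frac{(a_1)_n\cdots(a_{r+1})_n}{(b_1)_n\cdots(b_r)_n\,n!}z^n ,$$ where no $b_i$ is a nonpositive integer. $\Gamma$ is Euler's gamma function. *)

theory Defs
  imports "HOL-Analysis.Analysis"
begin

definition hyp_term :: "complex list \<Rightarrow> complex list \<Rightarrow> complex \<Rightarrow> nat \<Rightarrow> complex" where
  "hyp_term as bs z n =
     (\<Prod>a\<leftarrow>as. pochhammer a n) / ((\<Prod>b\<leftarrow>bs. pochhammer b n) * fact n) * z ^ n"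

definition hypergeom :: "complex list \<Rightarrow> complex list \<Rightarrow> complex \<Rightarrow> complex" where
  "hypergeom as bs z = (\<Sum>n. hyp_term as bs z n)"

end

theory Submission
  imports Defs
begin

text \<open>
  With \<open>a = f - 1\<close>, the \<open>n\<close>-th term of the \<open>\<^sub>6F\<^sub>5\<close> series is the term of the very-well-poised series
  \<open>\<^sub>4F\<^sub>3[a, 1 + a/2, a\<^sub>1, d\<^sub>2; a/2, 1 + a - a\<^sub>1, 1 + a - d\<^sub>2; 1]\<close> times
  \<open>(p + n)(f - p - 1 + n)/(p(f - p - 1)) = 1 + n(a + n)/(a\<^sub>1 h)\<close>.  The first part is summed by Dougall's
  formula; in the second, \<open>n(a + n)\<close> times the term is a multiple of the term with parameters
  \<open>(a + 2, a\<^sub>1 + 1, d\<^sub>2 + 1)\<close> at index \<open>n - 1\<close>, so Dougall's formula applies again.  The two Gamma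
  quotients differ by rational factors, and their combination is the stated closed form.

  A WZ-type certificate turns the contiguous
  relation \<open>S(a) = \<rho>(a) S(a + 2)\<close> into a telescoping sum.  Iterating it, the product of the \<open>\<rho>(a + 2j)\<close>
  is a quotient of Pochhammer symbols that converges to the Gamma quotient, while \<open>S(a + 2N) \<longrightarrow> 1\<close> by
  Tannery's theorem, since the terms of index \<open>k \<ge> 1\<close> are uniformly \<open>O(1/k\<^sup>2)\<close> and tend to \<open>0\<close>.
\<close>

section \<open>Pochhammer symbols\<close>

lemma notin_nonpos_Ints_iff: "(x::'a::ring_char_0) \<notin> \<int>\<^sub>\<le>\<^sub>0 \<longleftrightarrow> (\<forall>k::nat. x + of_nat k \<noteq> 0)"
proof
  assume "x \<notin> \<int>\<^sub>\<le>\<^sub>0"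
  then show "\<forall>k::nat. x + of_nat k \<noteq> 0"
    by (metis add.commute add_diff_cancel_left' diff_0 minus_of_nat_in_nonpos_Ints)
next
  assume "\<forall>k::nat. x + of_nat k \<noteq> 0"
  then show "x \<notin> \<int>\<^sub>\<le>\<^sub>0" by (auto elim!: nonpos_Ints_cases')
qed

lemma Re_pos_notin_nonpos_Ints: "Re z > 0 \<Longrightarrow> z \<notin> \<int>\<^sub>\<le>\<^sub>0"
  by (auto elim!: nonpos_Ints_cases')

lemma nonpos_Ints_halves:
  fixes f :: "'a::field_char_0"
  assumes "(f - 1) / 2 \<notin> \<int>\<^sub>\<le>\<^sub>0" "f / 2 \<notin> \<int>\<^sub>\<le>\<^sub>0"
  shows "f - 1 \<notin> \<int>\<^sub>\<le>\<^sub>0"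
proof -
  have "2 * ((f - 1) / 2) = f - 1" "(f - 1) / 2 + 1 / 2 = f / 2" by (simp_all add: field_simps)
  then show ?thesis using double_in_nonpos_Ints_imp[of "(f - 1) / 2"] assms by metis
qed

lemma pochhammer_plus2:
  "pochhammer (x + 2) n * (x * (x + 1)) = pochhammer (x::'a::comm_semiring_1) n * ((x + of_nat n) * (x + of_nat n + 1))"
proof -
  have "pochhammer x (Suc (Suc n)) = x * ((x + 1) * pochhammer (x + 2) n)"
    by (simp add: pochhammer_rec add.assoc one_add_one)
  moreover have "pochhammer x (Suc (Suc n)) = (x + of_nat n + 1) * ((x + of_nat n) * pochhammer x n)"
    by (simp add: pochhammer_rec' add_ac)
  ultimately show ?thesis by (simp add: algebra_simps)
qed

lemma pochhammer_Suc_rGamma_series: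
  "pochhammer z (Suc m) = rGamma_series z m * (fact m * exp (z * of_real (ln (of_nat m))))"
  unfolding rGamma_series_def by simp

lemma pochhammer_ratio_LIMSEQ:
  fixes w1 w2 w3 w4 :: complex
  assumes "w1 + w2 = w3 + w4" "w3 \<notin> \<int>\<^sub>\<le>\<^sub>0" "w4 \<notin> \<int>\<^sub>\<le>\<^sub>0"
  shows "(\<lambda>M. pochhammer w1 M * pochhammer w2 M / (pochhammer w3 M * pochhammer w4 M))
           \<longlonglongrightarrow> rGamma w1 * rGamma w2 / (rGamma w3 * rGamma w4)"
proof (rule LIMSEQ_imp_Suc)
  have "(\<lambda>m. rGamma_series w1 m * rGamma_series w2 m / (rGamma_series w3 m * rGamma_series w4 m))
           \<longlonglongrightarrow> rGamma w1 * rGamma w2 / (rGamma w3 * rGamma w4)"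
    using assms(2,3) by (intro tendsto_intros) (auto simp: rGamma_eq_zero_iff)
  moreover have "pochhammer w1 (Suc m) * pochhammer w2 (Suc m) / (pochhammer w3 (Suc m) * pochhammer w4 (Suc m))
     = rGamma_series w1 m * rGamma_series w2 m / (rGamma_series w3 m * rGamma_series w4 m)" for m
  proof -
    define L :: complex where "L = of_real (ln (of_nat m))"
    have "exp (w1 * L) * exp (w2 * L) = exp (w3 * L) * exp (w4 * L)"
      by (simp only: exp_add[symmetric] distrib_right[symmetric] assms(1))
    then show ?thesis unfolding pochhammer_Suc_rGamma_series L_def[symmetric]
      by (simp add: divide_simps)
  qed
  ultimately show "(\<lambda>m. pochhammer w1 (Suc m) * pochhammer w2 (Suc m) / (pochhammer w3 (Suc m) * pochhammer w4 (Suc m)))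
           \<longlonglongrightarrow> rGamma w1 * rGamma w2 / (rGamma w3 * rGamma w4)" by simp
qed

lemma pochhammer_nonneg_real: "0 \<le> (x::real) \<Longrightarrow> 0 \<le> pochhammer x n"
  by (induction n) (auto simp: pochhammer_Suc)

lemma pochhammer_mono_real: "0 \<le> r \<Longrightarrow> r \<le> s \<Longrightarrow> pochhammer r n \<le> pochhammer (s::real) n"
proof (induction n)
  case (Suc n)
  then show ?case unfolding pochhammer_Suc
    by (intro mult_mono) (auto intro: pochhammer_nonneg_real)
qed simp

lemma norm_pochhammer_le:
  fixes z :: complex
  assumes r: "r \<ge> 0" and H: "\<And>k. k < n \<Longrightarrow> norm (z + of_nat k) \<le> r + of_nat k"
  shows "norm (pochhammer z n) \<le> pochhammer r n"
  using H
proof (induction n)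
  case (Suc n)
  have "norm (pochhammer z (Suc n)) = norm (pochhammer z n) * norm (z + of_nat n)"
    by (simp add: pochhammer_Suc norm_mult)
  also have "\<dots> \<le> pochhammer r n * (r + of_nat n)"
    by (intro mult_mono Suc.IH Suc.prems) (use r in \<open>auto intro: pochhammer_nonneg_real\<close>)
  finally show ?case by (simp add: pochhammer_Suc)
qed simp

lemma norm_pochhammer_ge:
  fixes w :: complex
  assumes r: "r \<ge> 0" and H: "\<And>k. k < n \<Longrightarrow> r + of_nat k \<le> norm (w + of_nat k)"
  shows "pochhammer r n \<le> norm (pochhammer w n)"
  using H
proof (induction n)
  case (Suc n)
  have "pochhammer r (Suc n) = pochhammer r n * (r + of_nat n)" by (simp add: pochhammer_Suc)
  also have "\<dots> \<le> norm (pochhammer w n) * norm (w + of_nat n)"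
    by (intro mult_mono Suc.IH Suc.prems) (use r in \<open>auto intro: pochhammer_nonneg_real\<close>)
  finally show ?case by (simp add: pochhammer_Suc norm_mult)
qed simp

lemma norm_pochhammer_ratio_le:
  fixes z w :: complex and r s :: real
  assumes "r \<ge> 0" "s > 0" "\<And>k. norm (z + of_nat k) \<le> r + of_nat k" "\<And>k. s + of_nat k \<le> norm (w + of_nat k)"
  shows "norm (pochhammer z n) / norm (pochhammer w n) \<le> pochhammer r n / pochhammer s n"
proof (rule frac_le)
  show "norm (pochhammer z n) \<le> pochhammer r n" by (rule norm_pochhammer_le) (use assms in auto)
  show "pochhammer s n \<le> norm (pochhammer w n)" by (rule norm_pochhammer_ge) (use assms in auto)
qed (use assms in \<open>auto intro: pochhammer_nonneg_real pochhammer_pos\<close>)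

lemma pochhammer_swap_shift:
  "pochhammer r n * pochhammer (r + of_nat n) m = pochhammer r m * pochhammer (r + of_nat m) n"
  using pochhammer_product'[of r n m] pochhammer_product'[of r m n] by (simp add: add.commute)

lemma pochhammer_shift_le:
  assumes w: "(w::real) \<ge> 1"
  shows "pochhammer (w + of_nat n) m \<le> (1 + of_nat n)^m * pochhammer w m"
proof (induction m)
  case (Suc m)
  have "0 \<le> real n * (w + of_nat m - 1)" using w by simp
  then have "w + of_nat n + of_nat m \<le> (1 + of_nat n) * (w + of_nat m)" by (simp add: algebra_simps)
  then have "pochhammer (w + of_nat n) m * (w + of_nat n + of_nat m) \<le> ((1 + of_nat n)^m * pochhammer w m) * ((1 + of_nat n) * (w + of_nat m))"
    using w by (intro mult_mono Suc.IH) (auto intro!: mult_nonneg_nonneg pochhammer_nonneg_real)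
  then show ?case by (simp add: pochhammer_Suc algebra_simps)
qed simp

lemma pochhammer_ratio_le_power:
  assumes "(r::real) \<ge> 1"
  shows "pochhammer (r + of_nat m) n / pochhammer r n \<le> (1 + real n) ^ m"
proof -
  have pos: "pochhammer r n > 0" "pochhammer r m > 0" using assms by (auto intro: pochhammer_pos)
  have "pochhammer (r + of_nat m) n * pochhammer r m = pochhammer r n * pochhammer (r + of_nat n) m"
    using pochhammer_swap_shift[of r m n] by (simp add: mult.commute)
  also have "\<dots> \<le> pochhammer r n * ((1 + real n) ^ m * pochhammer r m)"
    using pos by (intro mult_left_mono pochhammer_shift_le assms) auto
  finally show ?thesis using pos by (simp add: divide_le_eq algebra_simps)
qed

lemma power_le_pochhammer_shift: "(\<beta>::real) \<ge> 0 \<Longrightarrow> real n ^ m \<le> pochhammer (\<beta> + of_nat n) m"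
proof (induction m)
  case (Suc m)
  then show ?case unfolding pochhammer_Suc power_Suc
    by (subst mult.commute) (intro mult_mono, auto)
qed simp

lemma pochhammer_ge_base: assumes "(r::real) \<ge> 1" "k \<ge> 1" shows "pochhammer r k \<ge> r"
proof -
  obtain j where k: "k = Suc j" using assms(2) by (cases k) auto
  have "pochhammer (1::real) j \<le> pochhammer (r + 1) j" by (rule pochhammer_mono_real) (use assms in auto)
  moreover have "pochhammer (1::real) j \<ge> 1" by (simp add: pochhammer_fact[symmetric])
  ultimately have "r * 1 \<le> r * pochhammer (r + 1) j" using assms(1) by (intro mult_left_mono) auto
  then show ?thesis unfolding k pochhammer_rec by simp
qed

lemma pochhammer_ratio_le_inverse_square:
  fixes \<beta> R :: real
  assumes \<beta>: "\<beta> \<ge> 0" and R: "R \<ge> \<beta> + real e + 2" and k: "k \<ge> 1"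
  shows "(1 + real k) ^ e * (pochhammer \<beta> k / pochhammer R k) \<le> 2 ^ e * pochhammer \<beta> (e + 2) * inverse (real k ^ 2)"
proof -
  define m where "m = e + 2"
  have pk: "pochhammer (\<beta> + real m) k > 0" "pochhammer (\<beta> + real k) m > 0" "pochhammer R k > 0"
    using \<beta> k R unfolding m_def by (auto intro!: pochhammer_pos)
  have k0: "real k > 0" using k by simp
  have R0: "R \<ge> 0" using \<beta> R by simp
  have "pochhammer \<beta> k / pochhammer R k \<le> pochhammer \<beta> k / pochhammer (\<beta> + real m) k"
    using \<beta> R pk unfolding m_def by (intro divide_left_mono pochhammer_mono_real mult_pos_pos) (auto intro: pochhammer_nonneg_real)
  also have "\<dots> = pochhammer \<beta> m / pochhammer (\<beta> + real k) m"
    using pochhammer_swap_shift[of \<beta> k m] pk by (simp add: field_simps)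
  also have "\<dots> \<le> pochhammer \<beta> m / real k ^ m"
    using \<beta> k0 pk by (intro divide_left_mono power_le_pochhammer_shift) (auto intro: pochhammer_nonneg_real)
  finally have A: "pochhammer \<beta> k / pochhammer R k \<le> pochhammer \<beta> m / real k ^ m" .
  have B: "(1 + real k) ^ e \<le> (2 * real k) ^ e" using k by (intro power_mono) auto
  have "(1 + real k) ^ e * (pochhammer \<beta> k / pochhammer R k) \<le> (2 * real k) ^ e * (pochhammer \<beta> m / real k ^ m)"
    using \<beta> R0 by (intro mult_mono A B) (auto intro!: divide_nonneg_nonneg pochhammer_nonneg_real)
  also have "\<dots> = 2 ^ e * pochhammer \<beta> m * inverse (real k ^ 2)"
    using k0 unfolding m_def by (simp add: power_mult_distrib power_add power2_eq_square field_simps)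
  finally show ?thesis unfolding m_def .
qed

section \<open>The very-well-poised series\<close>

text \<open>Since \<open>(a + 2n)/a = (1 + a/2)\<^sub>n / (a/2)\<^sub>n\<close>, this is the \<open>n\<close>-th term of the very-well-poised series
  \<open>\<^sub>4F\<^sub>3[a, 1 + a/2, b, c; a/2, 1 + a - b, 1 + a - c; 1]\<close>.\<close>
definition vwp_term :: "complex \<Rightarrow> complex \<Rightarrow> complex \<Rightarrow> nat \<Rightarrow> complex" where
  "vwp_term a b c n = (a + 2 * of_nat n) / a * (pochhammer a n * pochhammer b n * pochhammer c n)
      / (pochhammer (1 + a - b) n * pochhammer (1 + a - c) n * fact n)"

definition vwp_regular :: "complex \<Rightarrow> complex \<Rightarrow> complex \<Rightarrow> bool" where
  "vwp_regular a b c \<longleftrightarrow> a \<notin> \<int>\<^sub>\<le>\<^sub>0 \<and> 1 + a - b \<notin> \<int>\<^sub>\<le>\<^sub>0 \<and> 1 + a - c \<notin> \<int>\<^sub>\<le>\<^sub>0"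

lemma vwp_regularD:
  assumes "vwp_regular a b c"
  shows "a + of_nat k \<noteq> 0" "1 + a - b + of_nat k \<noteq> 0" "1 + a - c + of_nat k \<noteq> 0"
    "a \<noteq> 0" "a + 1 \<noteq> 0" "a + 2 \<noteq> 0" "a + 2 * of_nat k \<noteq> 0" "a + of_nat k + 1 \<noteq> 0"
    "2 + a - b + of_nat k \<noteq> 0" "2 + a - c + of_nat k \<noteq> 0" "1 + a - b \<noteq> 0" "1 + a - c \<noteq> 0"
    "2 + a - b \<noteq> 0" "2 + a - c \<noteq> 0"
proof -
  have H: "a + of_nat j \<noteq> 0 \<and> 1 + a - b + of_nat j \<noteq> 0 \<and> 1 + a - c + of_nat j \<noteq> 0" for j
    using assms by (auto simp: vwp_regular_def notin_nonpos_Ints_iff)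
  show "a + of_nat k \<noteq> 0" "1 + a - b + of_nat k \<noteq> 0" "1 + a - c + of_nat k \<noteq> 0" using H by auto
  show "a \<noteq> 0" "1 + a - b \<noteq> 0" "1 + a - c \<noteq> 0" using H[of 0] by simp_all
  show "a + 1 \<noteq> 0" "2 + a - b \<noteq> 0" "2 + a - c \<noteq> 0" using H[of 1] by (simp_all add: algebra_simps)
  show "a + 2 \<noteq> 0" using H[of 2] by simp
  show "a + 2 * of_nat k \<noteq> 0" using H[of "2*k"] by simp
  show "a + of_nat k + 1 \<noteq> 0" "2 + a - b + of_nat k \<noteq> 0" "2 + a - c + of_nat k \<noteq> 0"
    using H[of "k+1"] by (simp_all add: algebra_simps)
qed

lemma vwp_regular_pochhammer_nonzero:
  assumes "vwp_regular a b c"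
  shows "pochhammer a n \<noteq> 0" "pochhammer (1 + a - b) n \<noteq> 0" "pochhammer (1 + a - c) n \<noteq> 0"
  using assms pochhammer_eq_0_imp_nonpos_Int unfolding vwp_regular_def by blast+

lemma vwp_regular_shift2:
  assumes "vwp_regular a b c" shows "vwp_regular (a + 2) b c"
proof -
  have "x + 2 \<notin> \<int>\<^sub>\<le>\<^sub>0" if "x \<notin> \<int>\<^sub>\<le>\<^sub>0" for x :: complex
    unfolding notin_nonpos_Ints_iff
  proof
    fix k :: nat
    show "x + 2 + of_nat k \<noteq> 0"
      using that[unfolded notin_nonpos_Ints_iff, rule_format, of "k + 2"] by (simp add: add_ac)
  qed
  moreover have "1 + (a + 2) - b = (1 + a - b) + 2" "1 + (a + 2) - c = (1 + a - c) + 2" by simp_all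
  ultimately show ?thesis using assms unfolding vwp_regular_def by metis
qed

lemma vwp_regular_shiftN: "vwp_regular a b c \<Longrightarrow> vwp_regular (a + 2 * of_nat N) b c"
proof (induction N)
  case (Suc N)
  have "a + 2 * of_nat (Suc N) = (a + 2 * of_nat N) + 2" by (simp add: algebra_simps)
  then show ?case using vwp_regular_shift2[OF Suc.IH[OF Suc.prems]] by (simp only:)
qed simp

lemma vwp_regular_shift_all: "vwp_regular a b c \<Longrightarrow> vwp_regular (a + 2) (b + 1) (c + 1)"
  using vwp_regular_shift2[of a b c] plus_one_in_nonpos_Ints_imp[of "1 + a - b"] plus_one_in_nonpos_Ints_imp[of "1 + a - c"]
  unfolding vwp_regular_def by (auto simp: algebra_simps)

lemma vwp_term_Suc:
  assumes g: "vwp_regular a b c"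
  shows "vwp_term a b c (Suc n) = vwp_term a b c n * ((a + 2 * of_nat n + 2) * (a + of_nat n) * (b + of_nat n) * (c + of_nat n)
          / ((a + 2 * of_nat n) * (1 + a - b + of_nat n) * (1 + a - c + of_nat n) * (of_nat n + 1)))"
proof -
  have "(of_nat n + 1 :: complex) \<noteq> 0" by (metis of_nat_Suc of_nat_eq_0_iff nat.distinct(1) add.commute)
  then show ?thesis using vwp_regularD[OF g] vwp_regular_pochhammer_nonzero[OF g]
    unfolding vwp_term_def pochhammer_Suc fact_Suc of_nat_Suc of_nat_mult
    by (simp add: divide_simps) (simp add: algebra_simps)
qed

lemma vwp_term_shift2:
  assumes g: "vwp_regular a b c"
  shows "vwp_term (a + 2) b c n = vwp_term a b c n
     * (((a + 2 * of_nat n + 2) * (a + of_nat n) * (a + of_nat n + 1)) * ((1 + a - b) * (2 + a - b) * (1 + a - c) * (2 + a - c))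
       / ((a + 1) * (a + 2) * ((a + 2 * of_nat n) * (1 + a - b + of_nat n) * (2 + a - b + of_nat n) * (1 + a - c + of_nat n) * (2 + a - c + of_nat n))))"
proof -
  have shift: "pochhammer (x + 2) n = pochhammer x n * ((x + of_nat n) * (x + of_nat n + 1)) / (x * (x + 1))"
    if "x \<noteq> 0" "x + 1 \<noteq> 0" for x :: complex
    using pochhammer_plus2[of x n] that by (simp add: eq_divide_eq)
  note nz = vwp_regularD[OF g]
  have eqs: "1 + (a + 2) - b = (1 + a - b) + 2" "1 + (a + 2) - c = (1 + a - c) + 2"
    "1 + a - b + 1 = 2 + a - b" "1 + a - c + 1 = 2 + a - c"
    "1 + a - b + of_nat n + 1 = 2 + a - b + of_nat n" "1 + a - c + of_nat n + 1 = 2 + a - c + of_nat n"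
    by simp_all
  have A: "pochhammer (a + 2) n = pochhammer a n * ((a + of_nat n) * (a + of_nat n + 1)) / (a * (a + 1))"
    using nz by (intro shift) auto
  have B: "pochhammer (1 + a - b + 2) n = pochhammer (1 + a - b) n * ((1 + a - b + of_nat n) * (2 + a - b + of_nat n)) / ((1 + a - b) * (2 + a - b))"
    using shift[of "1 + a - b"] by (simp only: eqs nz not_False_eq_True simp_thms)
  have C: "pochhammer (1 + a - c + 2) n = pochhammer (1 + a - c) n * ((1 + a - c + of_nat n) * (2 + a - c + of_nat n)) / ((1 + a - c) * (2 + a - c))"
    using shift[of "1 + a - c"] by (simp only: eqs nz not_False_eq_True simp_thms)
  show ?thesis
    using nz vwp_regular_pochhammer_nonzero[OF g] unfolding vwp_term_def eqs(1,2) A B C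
    by (simp add: divide_simps)
qed

lemma vwp_term_Suc_shift_all:
  assumes g: "vwp_regular a b c"
  shows "of_nat (Suc m) * (a + of_nat (Suc m)) * vwp_term a b c (Suc m)
    = b * c * (a + 1) * (a + 2) / ((1 + a - b) * (1 + a - c)) * vwp_term (a + 2) (b + 1) (c + 1) m"
proof -
  define M :: complex where "M = of_nat m"
  define A where "A = pochhammer (a + 2) m"
  define P where "P = pochhammer (2 + a - b) m"
  define Q where "Q = pochhammer (2 + a - c) m"
  have nz: "P \<noteq> 0" "Q \<noteq> 0" "M + 1 \<noteq> 0" "a + 1 + M \<noteq> 0"
    using vwp_regularD[OF g] vwp_regular_pochhammer_nonzero[OF vwp_regular_shift_all[OF g]] of_nat_neq_0[of m, unfolded of_nat_Suc]
    unfolding P_def Q_def M_def by (auto simp: algebra_simps)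
  have "pochhammer (a + 1) m * (a + 1 + M) = (a + 1) * A"
    using pochhammer_rec[of "a + 1" m] pochhammer_rec'[of "a + 1" m] unfolding A_def M_def
    by (simp add: mult.commute one_add_one add.assoc)
  then have A1: "pochhammer (a + 1) m = (a + 1) * A / (a + 1 + M)" using nz by (simp add: eq_divide_eq)
  have e: "1 + a - b + 1 = 2 + a - b" "1 + a - c + 1 = 2 + a - c" "1 + (a + 2) - (b + 1) = 2 + a - b"
    "1 + (a + 2) - (c + 1) = 2 + a - c" "of_nat (Suc m) = M + 1" "a + 2 * (M + 1) = a + 2 + 2 * M"
    unfolding M_def by simp_all
  show ?thesis
    using vwp_regularD(4,6,11,12)[OF g] nz
    unfolding vwp_term_def pochhammer_rec[of a] pochhammer_rec[of b] pochhammer_rec[of c]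
      pochhammer_rec[of "1 + a - b"] pochhammer_rec[of "1 + a - c"] fact_Suc e M_def[symmetric]
      A1 A_def[symmetric] P_def[symmetric] Q_def[symmetric]
    by (simp add: divide_simps)
qed

lemma vwp_term_Suc_rGamma_series:
  assumes g: "vwp_regular a b c"
  shows "vwp_term a b c (Suc m) = (a + 2 * of_nat m + 2) / (a * (of_nat m + 1))
     * (rGamma_series a m * rGamma_series b m * rGamma_series c m / (rGamma_series (1 + a - b) m * rGamma_series (1 + a - c) m))
     * exp ((2*b + 2*c - a - 2) * of_real (ln (of_nat m)))"
proof -
  define L :: complex where "L = of_real (ln (of_nat m))"
  have "exp ((2*b + 2*c - a - 2) * L) * (exp ((1 + a - b) * L) * exp ((1 + a - c) * L)) = exp (a * L) * exp (b * L) * exp (c * L)"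
    by (simp add: exp_add[symmetric] algebra_simps)
  moreover have "(of_nat m + 1 :: complex) \<noteq> 0" by (metis of_nat_Suc of_nat_eq_0_iff nat.distinct(1) add.commute)
  ultimately show ?thesis
    using vwp_regularD(4)[OF g] unfolding vwp_term_def pochhammer_Suc_rGamma_series fact_Suc L_def[symmetric]
    by (simp add: divide_simps) (simp add: algebra_simps)
qed

lemma norm_vwp_prefactor_Suc_le:
  fixes a :: complex
  assumes "a \<noteq> 0"
  shows "norm ((a + 2 * of_nat m + 2) / (a * (of_nat m + 1))) \<le> 1 + 2 / norm a"
proof -
  have "a + 2 * of_nat m + 2 = a + of_nat (2 * m + 2)" by simp
  then have "norm (a + 2 * of_nat m + 2) \<le> norm a + 2 * (real m + 1)"
    using norm_triangle_ineq[of a "of_nat (2 * m + 2)"] by (simp only: norm_of_nat) simp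
  moreover have "norm (a * (of_nat m + 1)) = norm a * (real m + 1)"
    using norm_of_nat[of "Suc m", where 'a=complex] by (simp add: norm_mult add.commute)
  ultimately have "norm ((a + 2 * of_nat m + 2) / (a * (of_nat m + 1))) \<le> (norm a + 2 * (real m + 1)) / (norm a * (real m + 1))"
    by (simp add: norm_divide divide_right_mono)
  also have "\<dots> = 1 / (real m + 1) + 2 / norm a" using assms by (simp add: field_simps)
  also have "\<dots> \<le> 1 + 2 / norm a" by (simp add: field_simps)
  finally show ?thesis .
qed

lemma vwp_term_eventually_le:
  assumes g: "vwp_regular a b c"
  shows "\<exists>C. eventually (\<lambda>m. norm (vwp_term a b c (Suc m)) \<le> C * real m powr Re (2*b + 2*c - a - 2)) sequentially"
proof -
  define Qs where "Qs m = rGamma_series a m * rGamma_series b m * rGamma_series c m / (rGamma_series (1 + a - b) m * rGamma_series (1 + a - c) m)" for m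
  define Q where "Q = rGamma a * rGamma b * rGamma c / (rGamma (1 + a - b) * rGamma (1 + a - c))"
  have "(\<lambda>m. Qs m) \<longlonglongrightarrow> Q" unfolding Qs_def Q_def
    by (intro tendsto_intros) (use g in \<open>auto simp: rGamma_eq_zero_iff vwp_regular_def\<close>)
  then have "eventually (\<lambda>m. dist (Qs m) Q < 1) sequentially"
    by (rule tendstoD) simp
  then have "eventually (\<lambda>m. norm (vwp_term a b c (Suc m)) \<le> (1 + 2 / norm a) * (norm Q + 1) * real m powr Re (2*b + 2*c - a - 2)) sequentially"
    using eventually_gt_at_top[of "0::nat"]
  proof eventually_elim
    case (elim m)
    have "norm (Qs m) \<le> norm Q + 1" using elim(1) norm_triangle_ineq2[of "Qs m" Q]
      by (simp add: dist_norm)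
    moreover have "norm (exp ((2*b + 2*c - a - 2) * of_real (ln (of_nat m)))) = real m powr Re (2*b + 2*c - a - 2)"
      using elim(2) by (simp add: powr_def)
    ultimately show ?case
      unfolding vwp_term_Suc_rGamma_series[OF g] Qs_def[symmetric] norm_mult
      using norm_vwp_prefactor_Suc_le[OF vwp_regularD(4)[OF g], of m] by (intro mult_mono) auto
  qed
  then show ?thesis by blast
qed

lemma summable_norm_vwp_term:
  assumes g: "vwp_regular a b c" and re: "Re (1 + a - 2*b - 2*c) > 0"
  shows "summable (\<lambda>n. norm (vwp_term a b c n))"
proof -
  obtain C where C: "eventually (\<lambda>m. norm (vwp_term a b c (Suc m)) \<le> C * real m powr Re (2*b + 2*c - a - 2)) sequentially"
    using vwp_term_eventually_le[OF g] by blast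
  have "summable (\<lambda>m. C * real m powr Re (2*b + 2*c - a - 2))"
    using re by (intro summable_mult) (simp add: summable_real_powr_iff)
  then have "summable (\<lambda>m. norm (vwp_term a b c (Suc m)))"
    by (rule summable_comparison_test_ev[rotated]) (use C in auto)
  then show ?thesis by (subst summable_Suc_iff[symmetric])
qed

lemma vwp_term_times_of_nat_LIMSEQ:
  assumes g: "vwp_regular a b c" and re: "Re (1 + a - 2*b - 2*c) > 0"
  shows "(\<lambda>n. of_nat n * vwp_term a b c n) \<longlonglongrightarrow> 0"
proof -
  obtain C where C: "eventually (\<lambda>m. norm (vwp_term a b c (Suc m)) \<le> C * real m powr Re (2*b + 2*c - a - 2)) sequentially"
    using vwp_term_eventually_le[OF g] by blast
  define s where "s = Re (2*b + 2*c - a - 2)"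
  have s: "s + 1 < 0" using re unfolding s_def by simp
  have "(\<lambda>m. of_nat (Suc m) * vwp_term a b c (Suc m)) \<longlonglongrightarrow> 0"
  proof (rule Lim_null_comparison)
    show "eventually (\<lambda>m. norm (of_nat (Suc m) * vwp_term a b c (Suc m)) \<le> 2 * \<bar>C\<bar> * real m powr (s + 1)) sequentially"
      using C eventually_gt_at_top[of "0::nat"]
    proof eventually_elim
      case (elim m)
      have m1: "real m \<ge> 1" using elim(2) by simp
      have "norm (of_nat (Suc m) * vwp_term a b c (Suc m)) = (real m + 1) * norm (vwp_term a b c (Suc m))"
        by (simp only: norm_mult norm_of_nat) simp
      also have "\<dots> \<le> (real m + 1) * (\<bar>C\<bar> * real m powr s)"
      proof -
        have "C * real m powr s \<le> \<bar>C\<bar> * real m powr s" by (rule mult_right_mono) auto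
        then show ?thesis using elim(1) unfolding s_def by (intro mult_left_mono) auto
      qed
      also have "\<dots> \<le> (2 * real m) * (\<bar>C\<bar> * real m powr s)"
        using m1 by (intro mult_right_mono) auto
      also have "\<dots> = 2 * \<bar>C\<bar> * (real m powr s * real m powr 1)" using m1 by simp
      also have "\<dots> = 2 * \<bar>C\<bar> * real m powr (s + 1)" by (simp add: powr_add)
      finally show ?case .
    qed
    show "(\<lambda>m. 2 * \<bar>C\<bar> * real m powr (s + 1)) \<longlonglongrightarrow> 0"
      using tendsto_mult_right_zero[OF tendsto_neg_powr[OF s filterlim_real_sequentially]] by simp
  qed
  then show ?thesis by (rule LIMSEQ_imp_Suc)
qed

section \<open>The contiguous relation\<close>

text \<open>A WZ certificate for the contiguous relation in \<open>a \<mapsto> a + 2\<close>: the only property of this cubic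
  that is used is the recurrence below, which makes \<open>vwp_cert\<close> telescope.\<close>
definition vwp_cert_poly :: "complex \<Rightarrow> complex \<Rightarrow> complex \<Rightarrow> complex \<Rightarrow> complex" where
 "vwp_cert_poly a b c x =
   ((-1) + 3*c - 2*c^2 + 3*b - 5*b*c + 2*b*c^2 - 2*b^2 + 2*b^2*c - 5*a + 8*a*c - 2*a*c^2 + 8*a*b - 4*a*b*c - 2*a*b*c^2 - 2*a*b^2 - 2*a*b^2*c - 9*a^2 + 7*a^2*c + 7*a^2*b + a^2*b*c - 7*a^3 + 2*a^3*c + 2*a^3*b - 2*a^4)
 + ((-3) + 4*c + 4*b + 2*b*c - 4*b*c^2 - 4*b^2*c - 13*a + 10*a*c + 10*a*b + 2*a*b*c - 17*a^2 + 6*a^2*c + 6*a^2*b - 7*a^3) * x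
 + ((-5) + 4*c + 4*b - 12*a + 4*a*c + 4*a*b - 7*a^2) * x^2
 + ((-2) - 2*a) * x^3"

lemma vwp_cert_poly_recurrence:
  "(a + x) * (b + x) * (c + x) * vwp_cert_poly a b c (x + 1)
     - x * vwp_cert_poly a b c x * (2 + a - b + x) * (2 + a - c + x)
   = (1 + a - 2*b - 2*c) * (a + 1) * ((a + 2*x) * (1 + a - b + x) * (2 + a - b + x) * (1 + a - c + x) * (2 + a - c + x))
     - (1 + a - b - c) * (2 + a - b - c) * (1 + a - 2*b) * (1 + a - 2*c) * ((a + 2*x + 2) * (a + x) * (a + x + 1))"
  unfolding vwp_cert_poly_def by algebra

definition vwp_ratio :: "complex \<Rightarrow> complex \<Rightarrow> complex \<Rightarrow> complex" where
  "vwp_ratio a b c = (a + 2) * ((1+a-b-c)*(2+a-b-c)*(1+a-2*b)*(1+a-2*c))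
     / ((1 + a - b) * (2 + a - b) * (1 + a - c) * (2 + a - c) * (1 + a - 2*b - 2*c))"

definition vwp_cert :: "complex \<Rightarrow> complex \<Rightarrow> complex \<Rightarrow> nat \<Rightarrow> complex" where
  "vwp_cert a b c n = vwp_term a b c n * (of_nat n * vwp_cert_poly a b c (of_nat n))
     / ((1 + a - 2*b - 2*c) * (a + 1) * (a + 2 * of_nat n) * (1 + a - b + of_nat n) * (1 + a - c + of_nat n))"

lemma vwp_cert_diff:
  assumes g: "vwp_regular a b c" and D: "1 + a - 2*b - 2*c \<noteq> 0"
  shows "vwp_cert a b c (Suc n) - vwp_cert a b c n = vwp_term a b c n - vwp_ratio a b c * vwp_term (a + 2) b c n"
proof -
  define x :: complex where "x = of_nat n"
  define T where "T = vwp_term a b c n"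
  define P0 where "P0 = vwp_cert_poly a b c x"
  define P1 where "P1 = vwp_cert_poly a b c (x + 1)"
  define D0 where "D0 = 1 + a - 2*b - 2*c"
  define L where "L = (1 + a - b - c) * (2 + a - b - c) * (1 + a - 2*b) * (1 + a - 2*c)"
  define M where "M = (1 + a - b) * (2 + a - b) * (1 + a - c) * (2 + a - c)"
  define Q where "Q = (a + 2 * x) * (1 + a - b + x) * (2 + a - b + x) * (1 + a - c + x) * (2 + a - c + x)"
  define R where "R = (a + 2 * x + 2) * (a + x) * (a + x + 1)"
  have x1: "x + 1 \<noteq> 0" unfolding x_def by (metis of_nat_Suc of_nat_eq_0_iff nat.distinct(1) add.commute)
  have x2: "a + 2 * x + 2 \<noteq> 0" using vwp_regularD(7)[OF g, of "Suc n"] by (simp add: x_def algebra_simps)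
  note nz = vwp_regularD(1,2,3,7,8,9,10)[OF g, of n, folded x_def] vwp_regularD(4,5,6,11,12,13,14)[OF g]
  have nz': "D0 \<noteq> 0" "M \<noteq> 0" "Q \<noteq> 0" using nz D unfolding D0_def M_def Q_def by auto
  have cert_Suc: "vwp_cert a b c (Suc n) = T * ((a + x) * (b + x) * (c + x) * P1)
        / (D0 * (a + 1) * (a + 2 * x) * (1 + a - b + x) * (1 + a - c + x) * (2 + a - b + x) * (2 + a - c + x))"
  proof -
    have "of_nat (Suc n) = x + 1" "a + 2 * (x + 1) = a + 2 * x + 2" "1 + a - b + (x + 1) = 2 + a - b + x"
      "1 + a - c + (x + 1) = 2 + a - c + x"
      unfolding x_def by (simp_all add: algebra_simps)
    then show ?thesis using x1 x2 nz D unfolding vwp_cert_def vwp_term_Suc[OF g] x_def[symmetric] T_def P1_def D0_def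
      by (simp add: divide_simps) (simp add: algebra_simps)
  qed
  have cert: "vwp_cert a b c n = T * (x * P0) / (D0 * (a + 1) * (a + 2 * x) * (1 + a - b + x) * (1 + a - c + x))"
    unfolding vwp_cert_def x_def T_def P0_def D0_def ..
  have shift: "vwp_term (a + 2) b c n = T * (R * M / ((a + 1) * (a + 2) * Q))"
    unfolding vwp_term_shift2[OF g] T_def R_def M_def Q_def x_def ..
  have ratio: "vwp_ratio a b c = (a + 2) * L / (M * D0)"
    unfolding vwp_ratio_def L_def M_def D0_def by (simp add: mult_ac)
  have "vwp_cert a b c (Suc n) - vwp_cert a b c n
      = T * (((a + x) * (b + x) * (c + x) * P1 - x * P0 * (2 + a - b + x) * (2 + a - c + x)) / (D0 * (a + 1) * Q))"
    using nz nz' unfolding cert_Suc cert Q_def by (simp add: divide_simps) (simp add: algebra_simps)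
  also have "\<dots> = T * ((D0 * (a + 1) * Q - L * R) / (D0 * (a + 1) * Q))"
    unfolding P0_def P1_def D0_def L_def Q_def R_def vwp_cert_poly_recurrence ..
  also have "\<dots> = T - vwp_ratio a b c * vwp_term (a + 2) b c n"
    using nz nz' unfolding shift ratio by (simp add: divide_simps) (simp add: algebra_simps)
  finally show ?thesis unfolding T_def .
qed

lemma cubic_over_cubic_LIMSEQ:
  fixes p0 p1 p2 p3 K u1 u2 u3 :: complex
  assumes K: "K \<noteq> 0"
  shows "(\<lambda>n. (p0 + p1 * of_nat n + p2 * (of_nat n)^2 + p3 * (of_nat n)^3)
           / (K * (u1 + 2 * of_nat n) * (u2 + of_nat n) * (u3 + of_nat n))) \<longlonglongrightarrow> p3 / (K * 2)"
proof -
  define i where "i = (\<lambda>n::nat. inverse (of_nat n :: complex))"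
  have i0: "i \<longlonglongrightarrow> 0" unfolding i_def by (rule lim_inverse_n)
  have "(\<lambda>n. (p0 * i n ^ 3 + p1 * i n ^ 2 + p2 * i n + p3) / (K * (u1 * i n + 2) * (u2 * i n + 1) * (u3 * i n + 1)))
     \<longlonglongrightarrow> (p0 * 0 ^ 3 + p1 * 0 ^ 2 + p2 * 0 + p3) / (K * (u1 * 0 + 2) * (u2 * 0 + 1) * (u3 * 0 + 1))"
    by (intro tendsto_intros i0) (use K in simp)
  then have L: "(\<lambda>n. (p0 * i n ^ 3 + p1 * i n ^ 2 + p2 * i n + p3) / (K * (u1 * i n + 2) * (u2 * i n + 1) * (u3 * i n + 1)))
     \<longlonglongrightarrow> p3 / (K * 2)" by simp
  show ?thesis
  proof (rule Lim_transform_eventually[OF L])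
    show "eventually (\<lambda>n. (p0 * i n ^ 3 + p1 * i n ^ 2 + p2 * i n + p3) / (K * (u1 * i n + 2) * (u2 * i n + 1) * (u3 * i n + 1))
       = (p0 + p1 * of_nat n + p2 * (of_nat n)^2 + p3 * (of_nat n)^3)
           / (K * (u1 + 2 * of_nat n) * (u2 + of_nat n) * (u3 + of_nat n))) sequentially"
      using eventually_gt_at_top[of "0::nat"]
    proof eventually_elim
      case (elim n)
      define x :: complex where "x = of_nat n"
      have x: "x \<noteq> 0" using elim unfolding x_def by simp
      have ix: "i n = inverse x" unfolding i_def x_def ..
      have e1: "p0 * inverse x ^ 3 + p1 * inverse x ^ 2 + p2 * inverse x + p3 = (p0 + p1 * x + p2 * x^2 + p3 * x^3) / x^3"
        using x by (simp add: field_simps power2_eq_square power3_eq_cube)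
      have e2: "K * (u1 * inverse x + 2) * (u2 * inverse x + 1) * (u3 * inverse x + 1) = (K * (u1 + 2 * x) * (u2 + x) * (u3 + x)) / x^3"
        using x by (simp add: field_simps power3_eq_cube)
      show ?case unfolding ix e1 e2 x_def[symmetric] using x by simp
    qed
  qed
qed

lemma vwp_cert_LIMSEQ:
  assumes g: "vwp_regular a b c" and re: "Re (1 + a - 2*b - 2*c) > 0"
  shows "vwp_cert a b c \<longlonglongrightarrow> 0"
proof -
  have D: "1 + a - 2*b - 2*c \<noteq> 0" using re by (metis zero_complex.sel(1) less_irrefl)
  have "\<exists>p0 p1 p2 p3. \<forall>x. vwp_cert_poly a b c x = p0 + p1 * x + p2 * x^2 + p3 * x^3"
    unfolding vwp_cert_poly_def by blast
  then obtain p0 p1 p2 p3 where P: "\<And>x. vwp_cert_poly a b c x = p0 + p1 * x + p2 * x^2 + p3 * x^3" by blast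
  have K: "(1 + a - 2*b - 2*c) * (a + 1) \<noteq> 0" using D vwp_regularD(5)[OF g] by simp
  have "(\<lambda>n. (p0 + p1 * of_nat n + p2 * (of_nat n)^2 + p3 * (of_nat n)^3)
           / ((1 + a - 2*b - 2*c) * (a + 1) * (a + 2 * of_nat n) * ((1 + a - b) + of_nat n) * ((1 + a - c) + of_nat n))) \<longlonglongrightarrow> p3 / ((1 + a - 2*b - 2*c) * (a + 1) * 2)"
    by (rule cubic_over_cubic_LIMSEQ[OF K])
  then have L: "(\<lambda>n. vwp_cert_poly a b c (of_nat n) / ((1 + a - 2*b - 2*c) * (a + 1) * (a + 2 * of_nat n) * (1 + a - b + of_nat n) * (1 + a - c + of_nat n)))
     \<longlonglongrightarrow> p3 / ((1 + a - 2*b - 2*c) * (a + 1) * 2)" unfolding P by simp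
  have "(\<lambda>n. (of_nat n * vwp_term a b c n) * (vwp_cert_poly a b c (of_nat n) / ((1 + a - 2*b - 2*c) * (a + 1) * (a + 2 * of_nat n) * (1 + a - b + of_nat n) * (1 + a - c + of_nat n))))
     \<longlonglongrightarrow> 0 * (p3 / ((1 + a - 2*b - 2*c) * (a + 1) * 2))"
    by (intro tendsto_mult vwp_term_times_of_nat_LIMSEQ[OF g re] L)
  then show ?thesis unfolding vwp_cert_def[abs_def] by (simp add: ac_simps)
qed

lemma suminf_vwp_term_contiguous:
  assumes g: "vwp_regular a b c" and re: "Re (1 + a - 2*b - 2*c) > 0"
  shows "suminf (vwp_term a b c) = vwp_ratio a b c * suminf (vwp_term (a + 2) b c)"
proof -
  have D: "1 + a - 2*b - 2*c \<noteq> 0" using re by (metis zero_complex.sel(1) less_irrefl)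
  have g2: "vwp_regular (a + 2) b c" by (rule vwp_regular_shift2[OF g])
  have re2: "Re (1 + (a + 2) - 2*b - 2*c) > 0" using re by simp
  have s1: "summable (vwp_term a b c)" by (rule summable_norm_cancel[OF summable_norm_vwp_term[OF g re]])
  have s2: "summable (vwp_term (a + 2) b c)" by (rule summable_norm_cancel[OF summable_norm_vwp_term[OF g2 re2]])
  have "(\<lambda>n. vwp_cert a b c (Suc n) - vwp_cert a b c n) sums (0 - vwp_cert a b c 0)"
    by (rule telescope_sums[OF vwp_cert_LIMSEQ[OF g re]])
  then have "(\<lambda>n. vwp_term a b c n - vwp_ratio a b c * vwp_term (a + 2) b c n) sums 0"
    unfolding vwp_cert_diff[OF g D] by (simp add: vwp_cert_def)
  moreover have "(\<lambda>n. vwp_term a b c n - vwp_ratio a b c * vwp_term (a + 2) b c n) sums (suminf (vwp_term a b c) - vwp_ratio a b c * suminf (vwp_term (a + 2) b c))"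
    by (intro sums_diff sums_mult summable_sums s1 s2)
  ultimately show ?thesis using sums_unique2 by fastforce
qed

lemma suminf_vwp_term_iterate:
  assumes g: "vwp_regular a b c" and re: "Re (1 + a - 2*b - 2*c) > 0"
  shows "suminf (vwp_term a b c) = (\<Prod>j<N. vwp_ratio (a + 2 * of_nat j) b c) * suminf (vwp_term (a + 2 * of_nat N) b c)"
proof (induction N)
  case (Suc N)
  have re': "Re (1 + (a + 2 * of_nat N) - 2*b - 2*c) > 0" using re by simp
  have e: "a + 2 * of_nat (Suc N) = (a + 2 * of_nat N) + 2" by (simp add: algebra_simps)
  show ?case unfolding prod.lessThan_Suc Suc.IH e
    using suminf_vwp_term_contiguous[OF vwp_regular_shiftN[OF g] re'] by (simp add: mult.assoc)
qed simp

section \<open>Moving the first parameter to infinity\<close>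

lemma norm_vwp_prefactor_le:
  fixes x :: complex
  assumes "Re x \<ge> 1"
  shows "norm (x + 2 * of_nat n) / norm x \<le> 2 * (1 + \<bar>Im x\<bar>) * (1 + real n)"
proof -
  have "norm (x + 2 * of_nat n) \<le> Re x + \<bar>Im x\<bar> + 2 * real n"
    using cmod_le[of "x + 2 * of_nat n"] assms by simp
  also have "\<dots> \<le> Re x * (1 + \<bar>Im x\<bar> + 2 * real n)"
    using mult_nonneg_nonneg[of "Re x - 1" "\<bar>Im x\<bar> + 2 * real n"] assms by (simp add: algebra_simps)
  also have "\<dots> \<le> norm x * (2 * (1 + \<bar>Im x\<bar>) * (1 + real n))"
    using abs_Re_le_cmod[of x] assms by (intro mult_mono) (auto simp: algebra_simps)
  finally show ?thesis using assms abs_Re_le_cmod[of x] by (simp add: divide_le_eq mult.commute)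
qed

lemma norm_vwp_term_le:
  fixes x b c :: complex and m1 m2 n :: nat
  assumes y1: "Re x \<ge> 1" and r1: "Re x + \<bar>Im x\<bar> - real m1 \<ge> 1"
    and hm1: "\<bar>Im x\<bar> + Re b - 1 \<le> real m1" and hm2: "norm c \<le> 1 + real m2"
    and r2: "1 + Re x - Re c \<ge> 1"
  shows "norm (vwp_term x b c n) \<le> 2 * (1 + \<bar>Im x\<bar>) * (1 + real n)^(1 + m1 + m2)
           * (pochhammer (norm b) n / pochhammer (1 + Re x - Re c) n)"
proof -
  define R1 where "R1 = Re x + \<bar>Im x\<bar> - real m1"
  define R2 where "R2 = 1 + Re x - Re c"
  have R1: "R1 \<ge> 1" and R2: "R2 \<ge> 1" using r1 r2 unfolding R1_def R2_def by auto
  have "norm (pochhammer x n) / norm (pochhammer (1 + x - b) n) \<le> pochhammer (R1 + real m1) n / pochhammer R1 n"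
  proof (rule norm_pochhammer_ratio_le)
    fix k
    show "norm (x + of_nat k) \<le> R1 + real m1 + of_nat k"
      using cmod_le[of "x + of_nat k"] y1 unfolding R1_def by simp
    have "R1 + of_nat k \<le> Re (1 + x - b + of_nat k)" using hm1 unfolding R1_def by simp
    also have "\<dots> \<le> norm (1 + x - b + of_nat k)" by (rule complex_Re_le_cmod)
    finally show "R1 + of_nat k \<le> norm (1 + x - b + of_nat k)" .
  qed (use R1 in auto)
  also have "\<dots> \<le> (1 + real n) ^ m1" by (rule pochhammer_ratio_le_power[OF R1])
  finally have B1: "norm (pochhammer x n) / norm (pochhammer (1 + x - b) n) \<le> (1 + real n) ^ m1" .
  have "norm (pochhammer c n) / norm (pochhammer (1 :: complex) n) \<le> pochhammer (1 + real m2) n / pochhammer 1 n"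
  proof (rule norm_pochhammer_ratio_le)
    fix k
    show "norm (c + of_nat k) \<le> 1 + real m2 + of_nat k" using norm_triangle_ineq[of c "of_nat k"] hm2 by simp
    show "1 + of_nat k \<le> norm (1 + of_nat k :: complex)" using norm_of_nat[of "Suc k", where 'a=complex] by simp
  qed auto
  also have "\<dots> \<le> (1 + real n) ^ m2" using pochhammer_ratio_le_power[of 1 m2 n] by (simp add: add.commute)
  finally have B2: "norm (pochhammer c n) / fact n \<le> (1 + real n) ^ m2"
    by (simp add: pochhammer_fact[symmetric])
  have B3: "norm (pochhammer b n) / norm (pochhammer (1 + x - c) n) \<le> pochhammer (norm b) n / pochhammer R2 n"
  proof (rule norm_pochhammer_ratio_le)
    fix k
    show "norm (b + of_nat k) \<le> norm b + of_nat k" using norm_triangle_ineq[of b "of_nat k"] by simp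
    have "R2 + of_nat k = Re (1 + x - c + of_nat k)" unfolding R2_def by simp
    also have "\<dots> \<le> norm (1 + x - c + of_nat k)" by (rule complex_Re_le_cmod)
    finally show "R2 + of_nat k \<le> norm (1 + x - c + of_nat k)" .
  qed (use R2 in auto)
  have "norm (vwp_term x b c n) = norm (x + 2 * of_nat n) / norm x
      * (norm (pochhammer x n) / norm (pochhammer (1 + x - b) n)) * (norm (pochhammer c n) / fact n)
      * (norm (pochhammer b n) / norm (pochhammer (1 + x - c) n))"
    unfolding vwp_term_def by (simp add: norm_mult norm_divide mult_ac)
  also have "\<dots> \<le> 2 * (1 + \<bar>Im x\<bar>) * (1 + real n) * (1 + real n) ^ m1 * (1 + real n) ^ m2
      * (pochhammer (norm b) n / pochhammer R2 n)"
    by (intro mult_mono norm_vwp_prefactor_le[OF y1] B1 B2 B3) (auto intro!: divide_nonneg_nonneg)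
  finally show ?thesis unfolding R2_def by (simp add: power_add mult_ac)
qed

lemma vwp_term_shift_norm_bound:
  fixes a b c :: complex
  obtains N0 e :: nat and C :: real where "C \<ge> 0"
    "\<And>N k. N \<ge> N0 \<Longrightarrow> norm (vwp_term (a + 2 * of_nat N) b c k)
       \<le> C * (1 + real k) ^ e * (pochhammer (norm b) k / pochhammer (1 + Re a + 2 * real N - Re c) k)"
    "\<And>N. N \<ge> N0 \<Longrightarrow> norm b + real e + 2 \<le> 1 + Re a + 2 * real N - Re c"
    "\<And>N. N \<ge> N0 \<Longrightarrow> a + 2 * of_nat N \<noteq> 0"
proof -
  define d where "d = \<bar>Im a\<bar>"
  define m1 where "m1 = nat \<lceil>d + Re b\<rceil>"
  define m2 where "m2 = nat \<lceil>norm c\<rceil>"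
  have hm1: "d + Re b - 1 \<le> real m1" unfolding m1_def by linarith
  have hm2: "norm c \<le> 1 + real m2" unfolding m2_def by linarith
  obtain N0 :: nat where N0: "max (1 - Re a + real m1) (norm b + real m1 + real m2 + 2 - Re a + Re c) < real N0"
    using reals_Archimedean2 by blast
  show thesis
  proof
    show "0 \<le> 2 * (1 + d)" unfolding d_def by simp
    fix N assume "N \<ge> N0"
    then have N: "real N \<ge> real N0" by simp
    have re: "Re (a + 2 * of_nat N) = Re a + 2 * real N" "\<bar>Im (a + 2 * of_nat N)\<bar> = d" unfolding d_def by simp_all
    show "norm b + real (1 + m1 + m2) + 2 \<le> 1 + Re a + 2 * real N - Re c" using N N0 by simp
    show "a + 2 * of_nat N \<noteq> 0"
    proof
      assume "a + 2 * of_nat N = 0"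
      then have "Re a + 2 * real N = 0" using re(1) by simp
      then show False using N N0 by simp
    qed
    fix k
    have "1 + Re (a + 2 * of_nat N) - Re c \<ge> 1" using N N0 norm_ge_zero[of b] unfolding re(1) by linarith
    moreover have "Re (a + 2 * of_nat N) \<ge> 1" "Re (a + 2 * of_nat N) + \<bar>Im (a + 2 * of_nat N)\<bar> - real m1 \<ge> 1"
      "\<bar>Im (a + 2 * of_nat N)\<bar> + Re b - 1 \<le> real m1"
      using N N0 hm1 abs_ge_zero[of "Im a"] unfolding re d_def by linarith+
    ultimately show "norm (vwp_term (a + 2 * of_nat N) b c k)
       \<le> 2 * (1 + d) * (1 + real k) ^ (1 + m1 + m2) * (pochhammer (norm b) k / pochhammer (1 + Re a + 2 * real N - Re c) k)"
      using norm_vwp_term_le[of "a + 2 * of_nat N" m1 b c m2 k] hm2 unfolding re by (simp add: add.assoc)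
  qed
qed

lemma vwp_term_shift_LIMSEQ: "(\<lambda>N. vwp_term (a + 2 * of_nat N) b c k) \<longlonglongrightarrow> (if k = 0 then 1 else 0)"
proof -
  obtain N0 e C where C0: "C \<ge> 0"
    and bound: "\<And>N k. N \<ge> N0 \<Longrightarrow> norm (vwp_term (a + 2 * of_nat N) b c k)
       \<le> C * (1 + real k) ^ e * (pochhammer (norm b) k / pochhammer (1 + Re a + 2 * real N - Re c) k)"
    and large: "\<And>N. N \<ge> N0 \<Longrightarrow> norm b + real e + 2 \<le> 1 + Re a + 2 * real N - Re c"
    and nz: "\<And>N. N \<ge> N0 \<Longrightarrow> a + 2 * of_nat N \<noteq> 0"
    by (rule vwp_term_shift_norm_bound[of a b c]) blast
  define R where "R N = 1 + Re a + 2 * real N - Re c" for N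
  show ?thesis
  proof (cases "k = 0")
    case True
    have "eventually (\<lambda>N. vwp_term (a + 2 * of_nat N) b c k = 1) sequentially"
      using eventually_ge_at_top[of N0] by eventually_elim (use nz True in \<open>simp add: vwp_term_def\<close>)
    then show ?thesis using True by (simp add: tendsto_eventually)
  next
    case False
    define Ck where "Ck = C * (1 + real k) ^ e * pochhammer (norm b) k"
    have "filterlim (\<lambda>N. 2 * real N) at_top sequentially"
      by (rule filterlim_tendsto_pos_mult_at_top[OF tendsto_const]) (auto simp: filterlim_real_sequentially)
    from filterlim_tendsto_add_at_top[OF tendsto_const[of "1 + Re a - Re c"] this]
    have "filterlim R at_top sequentially" unfolding R_def by (simp add: algebra_simps)
    then have "(\<lambda>N. Ck / R N) \<longlonglongrightarrow> 0"
      by (intro tendsto_divide_0[OF tendsto_const] filterlim_at_top_imp_at_infinity)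
    moreover have "eventually (\<lambda>N. norm (vwp_term (a + 2 * of_nat N) b c k) \<le> Ck / R N) sequentially"
      using eventually_ge_at_top[of N0]
    proof eventually_elim
      case (elim N)
      have RN: "R N \<ge> 1" using large[OF elim] norm_ge_zero[of b] unfolding R_def by linarith
      have "pochhammer (norm b) k / pochhammer (R N) k \<le> pochhammer (norm b) k / R N"
        using RN pochhammer_ge_base[OF RN] pochhammer_pos[of "R N" k] False
        by (intro divide_left_mono) (auto intro: pochhammer_nonneg_real)
      then have "C * (1 + real k) ^ e * (pochhammer (norm b) k / pochhammer (R N) k)
          \<le> C * (1 + real k) ^ e * (pochhammer (norm b) k / R N)"
        by (rule mult_left_mono) (use C0 in auto)
      then show ?case using bound[OF elim, of k] unfolding Ck_def R_def by simp
    qed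
    ultimately have "(\<lambda>N. vwp_term (a + 2 * of_nat N) b c k) \<longlonglongrightarrow> 0"
      by (rule Lim_null_comparison[rotated])
    then show ?thesis using False by simp
  qed
qed

lemma suminf_vwp_term_shift_LIMSEQ: "(\<lambda>N. suminf (vwp_term (a + 2 * of_nat N) b c)) \<longlonglongrightarrow> 1"
proof -
  obtain N0 e C where C0: "C \<ge> 0"
    and bound: "\<And>N k. N \<ge> N0 \<Longrightarrow> norm (vwp_term (a + 2 * of_nat N) b c k)
       \<le> C * (1 + real k) ^ e * (pochhammer (norm b) k / pochhammer (1 + Re a + 2 * real N - Re c) k)"
    and large: "\<And>N. N \<ge> N0 \<Longrightarrow> norm b + real e + 2 \<le> 1 + Re a + 2 * real N - Re c"
    by (rule vwp_term_shift_norm_bound[of a b c]) blast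
  define M where "M k = C * (2 ^ e * pochhammer (norm b) (e + 2) * inverse (real k ^ 2))" for k
  have dominated: "norm (vwp_term (a + 2 * of_nat N) b c k) \<le> M k" if "N \<ge> N0" "k \<ge> 1" for N k
  proof -
    have "norm (vwp_term (a + 2 * of_nat N) b c k)
        \<le> C * ((1 + real k) ^ e * (pochhammer (norm b) k / pochhammer (1 + Re a + 2 * real N - Re c) k))"
      using bound[OF that(1), of k] by (simp only: mult.assoc)
    also have "\<dots> \<le> M k"
      unfolding M_def using large[OF that(1)] that(2)
      by (intro mult_left_mono[OF _ C0] pochhammer_ratio_le_inverse_square) auto
    finally show ?thesis .
  qed
  have "eventually (\<lambda>N. summable (\<lambda>k. norm (vwp_term (a + 2 * of_nat N) b c k))) sequentially \<and>
        summable (\<lambda>k. norm (if k = 0 then 1 else 0 :: complex)) \<and>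
        (\<lambda>N. suminf (vwp_term (a + 2 * of_nat N) b c)) \<longlonglongrightarrow> suminf (\<lambda>k. if k = 0 then 1 else 0 :: complex)"
  proof (rule tannerys_theorem[where M = M])
    show "eventually (\<lambda>(k, N). norm (vwp_term (a + 2 * of_nat N) b c k) \<le> M k) (sequentially \<times>\<^sub>F sequentially)"
      unfolding eventually_prod_sequentially by (rule exI[of _ "max 1 N0"]) (auto intro!: dominated)
    show "summable M"
      unfolding M_def by (intro summable_mult inverse_power_summable) simp
  qed (use vwp_term_shift_LIMSEQ in simp_all)
  moreover have "suminf (\<lambda>k. if k = 0 then 1 else 0 :: complex) = 1"
    using sums_single[of 0 "\<lambda>_. 1 :: complex"] by (simp add: sums_iff)
  ultimately show ?thesis by simp
qed

section \<open>Dougall's summation\<close>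

lemma vwp_ratio_split:
  fixes u b c :: complex
  defines "z \<equiv> (1 + u) / 2"
  assumes "1 + u \<noteq> 0" "1 + u - 2*b - 2*c \<noteq> 0"
    "1 + u - b \<noteq> 0" "2 + u - b \<noteq> 0" "1 + u - c \<noteq> 0" "2 + u - c \<noteq> 0"
  shows "vwp_ratio u b c
    = (1 + u) * (2 + u) * ((1 + u - b - c) * (2 + u - b - c)) / ((1 + u - b) * (2 + u - b) * ((1 + u - c) * (2 + u - c)))
      * ((z - b) * (z - c) / (z * (z - b - c)))"
  using assms unfolding vwp_ratio_def by (simp add: divide_simps) (simp add: algebra_simps)

lemma prod_vwp_ratio:
  fixes a b c :: complex
  defines "z \<equiv> (1 + a) / 2"
  assumes g: "vwp_regular a b c" and hz: "z \<notin> \<int>\<^sub>\<le>\<^sub>0" and re: "Re (1 + a - 2*b - 2*c) > 0"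
  shows "(\<Prod>j<N. vwp_ratio (a + 2 * of_nat j) b c)
    = pochhammer (1 + a) (2 * N) * pochhammer (1 + a - b - c) (2 * N) / (pochhammer (1 + a - b) (2 * N) * pochhammer (1 + a - c) (2 * N))
      * (pochhammer (z - b) N * pochhammer (z - c) N / (pochhammer z N * pochhammer (z - b - c) N))"
proof (induction N)
  case (Suc N)
  define u where "u = a + 2 * of_nat N"
  have zbc: "z - b - c \<notin> \<int>\<^sub>\<le>\<^sub>0"
    using re unfolding z_def by (intro Re_pos_notin_nonpos_Ints) (simp add: field_simps)
  have half: "(1 + u) / 2 = z + of_nat N" "(1 + u) / 2 - b = z - b + of_nat N" "(1 + u) / 2 - c = z - c + of_nat N"
    "(1 + u) / 2 - b - c = z - b - c + of_nat N"
    unfolding u_def z_def by (simp_all add: field_simps)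
  have nz_half: "z + of_nat N \<noteq> 0" "z - b - c + of_nat N \<noteq> 0"
    using hz zbc unfolding notin_nonpos_Ints_iff by blast+
  have "1 + u = 2 * (z + of_nat N)" "1 + u - 2*b - 2*c = 2 * (z - b - c + of_nat N)"
    unfolding u_def z_def by (simp_all add: field_simps)
  then have nz1: "1 + u \<noteq> 0" "1 + u - 2*b - 2*c \<noteq> 0"
    using nz_half by (metis mult_eq_0_iff zero_neq_numeral)+
  have nz2: "1 + u - b \<noteq> 0" "2 + u - b \<noteq> 0" "1 + u - c \<noteq> 0" "2 + u - c \<noteq> 0"
    using vwp_regularD(2,3,9,10)[OF g, of "2 * N"] unfolding u_def by (simp_all add: algebra_simps)
  have two_steps: "pochhammer w (2 * Suc N) = pochhammer w (2 * N) * ((w + 2 * of_nat N) * (w + 2 * of_nat N + 1))" for w :: complex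
    by (simp add: pochhammer_Suc algebra_simps)
  have nz_poch: "pochhammer (1 + a - b) (2 * N) \<noteq> 0" "pochhammer (1 + a - c) (2 * N) \<noteq> 0"
    "pochhammer z N \<noteq> 0" "pochhammer (z - b - c) N \<noteq> 0"
    using vwp_regular_pochhammer_nonzero[OF g] hz zbc pochhammer_eq_0_imp_nonpos_Int by blast+
  have e: "1 + a + 2 * of_nat N = 1 + u" "1 + a + 2 * of_nat N + 1 = 2 + u"
    "1 + a - b - c + 2 * of_nat N = 1 + u - b - c" "1 + a - b - c + 2 * of_nat N + 1 = 2 + u - b - c"
    "1 + a - b + 2 * of_nat N = 1 + u - b" "1 + a - b + 2 * of_nat N + 1 = 2 + u - b"
    "1 + a - c + 2 * of_nat N = 1 + u - c" "1 + a - c + 2 * of_nat N + 1 = 2 + u - c"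
    unfolding u_def by (simp_all add: algebra_simps)
  show ?case
    unfolding prod.lessThan_Suc Suc.IH u_def[symmetric] two_steps pochhammer_Suc e half(2-4)[symmetric]
      vwp_ratio_split[OF nz1 nz2] half(1)
    using nz_poch nz_half nz2 by (simp add: divide_simps) (simp add: algebra_simps)
qed simp

text \<open>Dougall's nonterminating \<open>\<^sub>5F\<^sub>4\<close> sum with \<open>d = (1 + a)/2\<close>, where one upper and one lower parameter
  cancel; reciprocal Gamma values keep the right-hand side defined at poles.\<close>
theorem vwp_term_sums:
  fixes a b c :: complex
  defines "z \<equiv> (1 + a) / 2"
  assumes g: "vwp_regular a b c" and hz: "z \<notin> \<int>\<^sub>\<le>\<^sub>0" and re: "Re (1 + a - 2*b - 2*c) > 0"
  shows "vwp_term a b c sums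
    (rGamma (1 + a) * rGamma (1 + a - b - c) / (rGamma (1 + a - b) * rGamma (1 + a - c))
      * (rGamma (z - b) * rGamma (z - c) / (rGamma z * rGamma (z - b - c))))" (is "_ sums ?S")
proof -
  have zbc: "z - b - c \<notin> \<int>\<^sub>\<le>\<^sub>0"
    using re unfolding z_def by (intro Re_pos_notin_nonpos_Ints) (simp add: field_simps)
  have "(\<lambda>N. pochhammer (1 + a) N * pochhammer (1 + a - b - c) N / (pochhammer (1 + a - b) N * pochhammer (1 + a - c) N))
      \<longlonglongrightarrow> rGamma (1 + a) * rGamma (1 + a - b - c) / (rGamma (1 + a - b) * rGamma (1 + a - c))"
    using g unfolding vwp_regular_def by (intro pochhammer_ratio_LIMSEQ) auto
  from LIMSEQ_subseq_LIMSEQ[OF this, of "\<lambda>N. 2 * N"]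
  have L1: "(\<lambda>N. pochhammer (1 + a) (2 * N) * pochhammer (1 + a - b - c) (2 * N) / (pochhammer (1 + a - b) (2 * N) * pochhammer (1 + a - c) (2 * N)))
      \<longlonglongrightarrow> rGamma (1 + a) * rGamma (1 + a - b - c) / (rGamma (1 + a - b) * rGamma (1 + a - c))"
    by (simp add: strict_mono_def o_def)
  have L2: "(\<lambda>N. pochhammer (z - b) N * pochhammer (z - c) N / (pochhammer z N * pochhammer (z - b - c) N))
      \<longlonglongrightarrow> rGamma (z - b) * rGamma (z - c) / (rGamma z * rGamma (z - b - c))"
    using hz zbc by (intro pochhammer_ratio_LIMSEQ) auto
  have "(\<lambda>N. (\<Prod>j<N. vwp_ratio (a + 2 * of_nat j) b c) * suminf (vwp_term (a + 2 * of_nat N) b c)) \<longlonglongrightarrow> ?S * 1"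
    unfolding prod_vwp_ratio[OF g hz[unfolded z_def] re, folded z_def]
    by (intro tendsto_mult L1 L2 suminf_vwp_term_shift_LIMSEQ)
  then have "suminf (vwp_term a b c) = ?S"
    unfolding suminf_vwp_term_iterate[OF g re, symmetric] by (simp add: LIMSEQ_const_iff)
  moreover have "summable (vwp_term a b c)" by (rule summable_norm_cancel[OF summable_norm_vwp_term[OF g re]])
  ultimately show ?thesis using summable_sums by fastforce
qed

section \<open>The \<open>\<^sub>6F\<^sub>5\<close> series\<close>

lemma sums_vwp_term_times_shift:
  assumes g: "vwp_regular a b c" and S: "vwp_term (a + 2) (b + 1) (c + 1) sums S"
  shows "(\<lambda>n. of_nat n * (a + of_nat n) * vwp_term a b c n)
    sums (b * c * (a + 1) * (a + 2) / ((1 + a - b) * (1 + a - c)) * S)"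
proof -
  have "(\<lambda>m. of_nat (Suc m) * (a + of_nat (Suc m)) * vwp_term a b c (Suc m))
      sums (b * c * (a + 1) * (a + 2) / ((1 + a - b) * (1 + a - c)) * S)"
    unfolding vwp_term_Suc_shift_all[OF g] by (rule sums_mult[OF S])
  then show ?thesis using sums_Suc_iff[of "\<lambda>n. of_nat n * (a + of_nat n) * vwp_term a b c n"] by simp
qed

lemma hyp_term_vwp_extra_pair:
  fixes a b c p q :: complex
  assumes "a / 2 \<notin> \<int>\<^sub>\<le>\<^sub>0" "p \<notin> \<int>\<^sub>\<le>\<^sub>0" "q \<notin> \<int>\<^sub>\<le>\<^sub>0" "1 + a - b \<notin> \<int>\<^sub>\<le>\<^sub>0" "1 + a - c \<notin> \<int>\<^sub>\<le>\<^sub>0"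
  shows "hyp_term [a, a / 2 + 1, b, q + 1, p + 1, c] [a / 2, 1 + a - b, p, q, 1 + a - c] 1 n
    = vwp_term a b c n * ((p + of_nat n) * (q + of_nat n) / (p * q))"
proof -
  have plus1: "pochhammer (x + 1) n = pochhammer x n * (x + of_nat n) / x" if "x \<noteq> 0" for x :: complex
    using pochhammer_rec[of x n] pochhammer_rec'[of x n] that by (simp add: field_simps)
  have nz: "a / 2 \<noteq> 0" "p \<noteq> 0" "q \<noteq> 0" using assms(1-3) by auto
  have "pochhammer (a / 2) n \<noteq> 0" "pochhammer p n \<noteq> 0" "pochhammer q n \<noteq> 0"
    "pochhammer (1 + a - b) n \<noteq> 0" "pochhammer (1 + a - c) n \<noteq> 0"
    using assms pochhammer_eq_0_imp_nonpos_Int by blast+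
  moreover have "hyp_term [a, a / 2 + 1, b, q + 1, p + 1, c] [a / 2, 1 + a - b, p, q, 1 + a - c] 1 n
    = pochhammer a n * pochhammer (a / 2 + 1) n * pochhammer b n * pochhammer (q + 1) n * pochhammer (p + 1) n * pochhammer c n
      / (pochhammer (a / 2) n * pochhammer (1 + a - b) n * pochhammer p n * pochhammer q n * pochhammer (1 + a - c) n * fact n)"
    unfolding hyp_term_def by (simp add: mult.assoc)
  ultimately show ?thesis using nz
    unfolding vwp_term_def plus1[OF nz(1)] plus1[OF nz(2)] plus1[OF nz(3)]
    by (simp add: divide_simps) (simp add: algebra_simps)
qed

lemma vwp_term_minus_one_sums:
  fixes f b c :: complex
  assumes g: "vwp_regular (f - 1) b c" and hf2: "f / 2 \<notin> \<int>\<^sub>\<le>\<^sub>0" and re: "Re (f - 2*b - 2*c) > 0"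
  shows "vwp_term (f - 1) b c sums (rGamma f * rGamma (f - b - c) / (rGamma (f - b) * rGamma (f - c))
      * (rGamma (f/2 - b) * rGamma (f/2 - c) / (rGamma (f/2) * rGamma (f/2 - b - c))))"
  using vwp_term_sums[OF g] hf2 re by (simp add: algebra_simps)

lemma weighted_vwp_term_minus_one_sums:
  fixes f b c :: complex
  assumes g: "vwp_regular (f - 1) b c" and hf2: "f / 2 \<notin> \<int>\<^sub>\<le>\<^sub>0" and re: "Re (f - 2*b - 2*c - 2) > 0"
  shows "(\<lambda>n. of_nat n * (f - 1 + of_nat n) * vwp_term (f - 1) b c n) sums
    (b * c * f * (f + 1) / ((f - b) * (f - c))
      * (rGamma (f + 2) * rGamma (f - b - c) / (rGamma (f + 1 - b) * rGamma (f + 1 - c))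
        * (rGamma (f/2 - b) * rGamma (f/2 - c) / (rGamma (f/2 + 1) * rGamma (f/2 - b - c - 1)))))"
proof -
  have eqs: "1 + (f - 1 + 2) = f + 2" "(f + 2) / 2 = f/2 + 1" "f + 2 - (b + 1) = f + 1 - b"
    "f + 2 - (c + 1) = f + 1 - c" "f + 1 - b - (c + 1) = f - b - c" "f/2 + 1 - (b + 1) = f/2 - b"
    "f/2 + 1 - (c + 1) = f/2 - c" "f/2 - b - (c + 1) = f/2 - b - c - 1"
    "f + 2 - 2 * (b + 1) - 2 * (c + 1) = f - 2*b - 2*c - 2"
    by (simp_all add: field_simps)
  have "vwp_term (f - 1 + 2) (b + 1) (c + 1) sums (rGamma (f + 2) * rGamma (f - b - c) / (rGamma (f + 1 - b) * rGamma (f + 1 - c))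
        * (rGamma (f/2 - b) * rGamma (f/2 - c) / (rGamma (f/2 + 1) * rGamma (f/2 - b - c - 1))))"
    using hf2 plus_one_in_nonpos_Ints_imp[of "f/2"] re
    by (intro vwp_term_sums[OF vwp_regular_shift_all[OF g], unfolded eqs]) auto
  from sums_vwp_term_times_shift[OF g this] show ?thesis by (simp add: algebra_simps)
qed

lemma hyp_term_wp6F5_split:
  fixes f a1 p d2 :: complex
  assumes "(f - 1) / 2 \<notin> \<int>\<^sub>\<le>\<^sub>0" "f - a1 \<notin> \<int>\<^sub>\<le>\<^sub>0" "p \<notin> \<int>\<^sub>\<le>\<^sub>0" "f - p - 1 \<notin> \<int>\<^sub>\<le>\<^sub>0" "f - d2 \<notin> \<int>\<^sub>\<le>\<^sub>0"
  shows "hyp_term [f - 1, (f + 1) / 2, a1, f - p, p + 1, d2] [(f - 1) / 2, f - a1, p, f - p - 1, f - d2] 1 n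
      = vwp_term (f - 1) a1 d2 n + of_nat n * (f - 1 + of_nat n) * vwp_term (f - 1) a1 d2 n / (p * (f - p - 1))"
proof -
  have eqs: "(f - 1) / 2 + 1 = (f + 1) / 2" "f - p - 1 + 1 = f - p" "1 + (f - 1) - a1 = f - a1" "1 + (f - 1) - d2 = f - d2"
    by (simp_all add: field_simps)
  have "p \<noteq> 0" "f - p - 1 \<noteq> 0" using assms(3,4) by auto
  then show ?thesis
    using hyp_term_vwp_extra_pair[of "f - 1" p "f - p - 1" a1 d2 n, unfolded eqs] assms
    by (simp add: divide_simps) (simp add: algebra_simps)
qed

lemma wp6F5_value:
  fixes f a1 d2 h k :: complex
  assumes hRe: "Re (f - 2*a1 - 2*d2 - 2) > 0" and hf1: "f + 1 \<noteq> 0" and hf2: "f / 2 \<notin> \<int>\<^sub>\<le>\<^sub>0"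
    and hb2: "f - a1 \<notin> \<int>\<^sub>\<le>\<^sub>0" and hb5: "f - d2 \<notin> \<int>\<^sub>\<le>\<^sub>0" and ha1: "a1 \<noteq> 0"
    and hden: "d2 * f / 2 - h * (1 + d2 + a1 - f / 2) \<noteq> 0"
    and hk: "k = h * (1 + a1 - f / 2) * (1 + d2 + a1 - f) / (d2 * f / 2 - h * (1 + d2 + a1 - f / 2))"
    and hknp: "k \<notin> \<int>\<^sub>\<le>\<^sub>0"
  shows "rGamma f * rGamma (f - a1 - d2) / (rGamma (f - a1) * rGamma (f - d2))
        * (rGamma (f/2 - a1) * rGamma (f/2 - d2) / (rGamma (f/2) * rGamma (f/2 - a1 - d2)))
      + a1 * d2 * f * (f + 1) / ((f - a1) * (f - d2))
        * (rGamma (f + 2) * rGamma (f - a1 - d2) / (rGamma (f + 1 - a1) * rGamma (f + 1 - d2))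
          * (rGamma (f/2 - a1) * rGamma (f/2 - d2) / (rGamma (f/2 + 1) * rGamma (f/2 - a1 - d2 - 1)))) / (a1 * h)
    = Gamma (f/2) * Gamma (f - d2) * Gamma (f - a1) * Gamma (f/2 - a1 - d2 - 1)
        / (Gamma f * Gamma (f/2 - d2) * Gamma (f/2 - a1 - 1) * Gamma (f - a1 - d2 - 1))
      * (Gamma k / Gamma (k + 1))"
proof -
  have rGamma_shift: "rGamma v = rGamma w / w" if "w \<noteq> 0" "v = w + 1" for v w :: complex
    using rGamma_plus1[of w] that by (simp add: field_simps)
  have "k \<noteq> 0" using hknp by auto
  then have hX: "h * (1 + a1 - f / 2) * (1 + d2 + a1 - f) \<noteq> 0" using hk by (metis div_0)
  moreover have "f/2 - a1 - 1 = - (1 + a1 - f / 2)" "f - a1 - d2 - 1 = - (1 + d2 + a1 - f)" by simp_all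
  ultimately have h0: "h \<noteq> 0" and Z1: "f/2 - a1 - 1 \<noteq> 0" and F1: "f - a1 - d2 - 1 \<noteq> 0"
    by (simp_all only: mult_eq_0_iff neg_equal_0_iff_equal de_Morgan_disj) simp_all
  have Z2n: "f/2 - a1 - d2 - 1 \<notin> \<int>\<^sub>\<le>\<^sub>0"
    using hRe by (intro Re_pos_notin_nonpos_Ints) (simp add: field_simps)
  have nz: "f \<noteq> 0" "f - a1 \<noteq> 0" "f - d2 \<noteq> 0" "f/2 - a1 - d2 - 1 \<noteq> 0"
    "rGamma (f/2) \<noteq> 0" "rGamma (f - d2) \<noteq> 0" "rGamma (f - a1) \<noteq> 0" "rGamma (f/2 - a1 - d2 - 1) \<noteq> 0"
    using hf2 hb2 hb5 Z2n by (auto simp: rGamma_eq_zero_iff)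
  have shifts: "rGamma (f/2 - a1) = rGamma (f/2 - a1 - 1) / (f/2 - a1 - 1)"
    "rGamma (f - a1 - d2) = rGamma (f - a1 - d2 - 1) / (f - a1 - d2 - 1)"
    "rGamma (f/2 - a1 - d2) = rGamma (f/2 - a1 - d2 - 1) / (f/2 - a1 - d2 - 1)"
    "rGamma (f + 1 - a1) = rGamma (f - a1) / (f - a1)" "rGamma (f + 1 - d2) = rGamma (f - d2) / (f - d2)"
    "rGamma (f/2 + 1) = rGamma (f/2) / (f/2)" "rGamma (f + 2) = rGamma (f + 1) / (f + 1)"
    "rGamma (f + 1) = rGamma f / f"
    by (rule rGamma_shift; use Z1 F1 nz hf1 in simp)+
  have Gk: "Gamma k / Gamma (k + 1) = 1 / k"
    using Gamma_plus1[OF hknp] Gamma_nonzero[OF hknp] \<open>k \<noteq> 0\<close> by (simp add: field_simps)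
  have inverse_ratio: "inverse A * inverse B * inverse C * inverse D / (inverse E * inverse F * inverse G * inverse H)
      = E * F * G * H / (A * B * C * D)" for A B C D E F G H :: complex
    by (simp add: divide_inverse inverse_mult_distrib mult_ac)
  show ?thesis
    unfolding Gk unfolding Gamma_def inverse_ratio shifts hk
    using nz h0 Z1 F1 ha1 hden hf1 hX by (simp add: divide_simps) (simp add: algebra_simps)
qed

theorem mainTheorem6:
  fixes f a1 p d2 h k :: complex
  assumes hRe: "Re (f - 2*a1 - 2*d2 - 2) > 0"
    and hb1: "(f - 1) / 2 \<notin> \<int>\<^sub>\<le>\<^sub>0"
    and hb2: "f - a1 \<notin> \<int>\<^sub>\<le>\<^sub>0"
    and hb3: "p \<notin> \<int>\<^sub>\<le>\<^sub>0"
    and hb4: "f - p - 1 \<notin> \<int>\<^sub>\<le>\<^sub>0"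
    and hb5: "f - d2 \<notin> \<int>\<^sub>\<le>\<^sub>0"
    and ha1: "a1 \<noteq> 0"
    and hf2: "f / 2 \<notin> \<int>\<^sub>\<le>\<^sub>0"
    and hden: "d2 * f / 2 - h * (1 + d2 + a1 - f / 2) \<noteq> 0"
    and hh: "h = p * (f - p - 1) / a1"
    and hk: "k = h * (1 + a1 - f / 2) * (1 + d2 + a1 - f) / (d2 * f / 2 - h * (1 + d2 + a1 - f / 2))"
    and hknp: "k \<notin> \<int>\<^sub>\<le>\<^sub>0"
  shows "(hyp_term [f - 1, (f + 1) / 2, a1, f - p, p + 1, d2]
                   [(f - 1) / 2, f - a1, p, f - p - 1, f - d2] 1) sums
           (Gamma (f/2) * Gamma (f - d2) * Gamma (f - a1) * Gamma (f/2 - a1 - d2 - 1)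
            / (Gamma f * Gamma (f/2 - d2) * Gamma (f/2 - a1 - 1) * Gamma (f - a1 - d2 - 1))
            * (Gamma k / Gamma (k + 1)))"
proof -
  have "f - 1 \<notin> \<int>\<^sub>\<le>\<^sub>0" by (rule nonpos_Ints_halves[OF hb1 hf2])
  then have g: "vwp_regular (f - 1) a1 d2" using hb2 hb5 by (simp add: vwp_regular_def)
  have f1: "f + 1 \<noteq> 0"
  proof
    assume "f + 1 = 0"
    then have "f = - 1" by (simp add: eq_neg_iff_add_eq_0)
    then have "(f - 1) / 2 = - 1" by simp
    with hb1 show False by simp
  qed
  have "Re (f - 2*a1 - 2*d2) > 0" using hRe by simp
  from sums_add[OF vwp_term_minus_one_sums[OF g hf2 this]
      sums_divide[OF weighted_vwp_term_minus_one_sums[OF g hf2 hRe], of "p * (f - p - 1)"]]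
  have "(hyp_term [f - 1, (f + 1) / 2, a1, f - p, p + 1, d2] [(f - 1) / 2, f - a1, p, f - p - 1, f - d2] 1) sums
      (rGamma f * rGamma (f - a1 - d2) / (rGamma (f - a1) * rGamma (f - d2))
        * (rGamma (f/2 - a1) * rGamma (f/2 - d2) / (rGamma (f/2) * rGamma (f/2 - a1 - d2)))
      + a1 * d2 * f * (f + 1) / ((f - a1) * (f - d2))
        * (rGamma (f + 2) * rGamma (f - a1 - d2) / (rGamma (f + 1 - a1) * rGamma (f + 1 - d2))
          * (rGamma (f/2 - a1) * rGamma (f/2 - d2) / (rGamma (f/2 + 1) * rGamma (f/2 - a1 - d2 - 1)))) / (a1 * h))"
    unfolding hyp_term_wp6F5_split[OF hb1 hb2 hb3 hb4 hb5] using hh ha1 by simp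
  then show ?thesis unfolding wp6F5_value[OF hRe f1 hf2 hb2 hb5 ha1 hden hk hknp] .
qed

end
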